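(* Let $L>0$, let $a$ satisfy (H_a), $g\in L^2(0,L)$, and let $\phi$ satisfy (H_φ) with $\phi(0)=+\infty$. Assume moreover that $\int_0^{\delta}\phi(t)\,dt=+\infty$ and $\int_{-\delta}^0\phi(t)\,dt=+\infty$ for every $\delta\in(0,1)$. Then problem (P) has no weak solution.
   Context: (H_a): $a\in L^\infty(0,L)$ and there are constants $0<\alpha<\beta$ with $\alpha\le a(x)\le\beta$ for a.e. $x\in(0,L)$. (H_φ): $\phi:\mathbb{R}\to\mathbb{R}\cup\{+\infty\}$ is continuous when $\mathbb{R}\cup\{+\infty\}$ carries its usual topology, and $\phi(s)<+\infty$ for every $s\neq0$ (since $\phi(0)=+\infty$, $\phi\ge0$ near $0$, so the integrals make sense). A weak solution of problem (P) with data $(a,g,\phi)$ is a function $u$ with $u\in H^1_0(0,L)$, $\phi(u)\in L^2(0,L)$, and $-\frac{d}{dx}(a\frac{du}{dx})=-\frac{d\phi(u)}{dx}-\frac{dg}{dx}$ in $\mathcal D'(0,L)$. *)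

theory Defs
  imports "HOL-Analysis.Analysis"
begin

definition L2_on :: "real \<Rightarrow> (real \<Rightarrow> real) \<Rightarrow> bool" where
  "L2_on L f \<longleftrightarrow> f \<in> borel_measurable (lebesgue_on {0<..<L})
      \<and> integrable (lebesgue_on {0<..<L}) (\<lambda>x. (f x)^2)"

definition test_fun :: "real \<Rightarrow> (real \<Rightarrow> real) \<Rightarrow> bool" where
  "test_fun L \<psi> \<longleftrightarrow> (\<forall>n x. ((deriv ^^ n) \<psi>) differentiable (at x))
      \<and> (\<exists>c d. 0 < c \<and> c \<le> d \<and> d < L \<and> (\<forall>x. x \<notin> {c..d} \<longrightarrow> \<psi> x = 0))"

text \<open>u in H^1_0(0,L) with weak derivative u': u is (a.e.) the primitive of the
  L^2 function u' vanishing at 0, and u(L) = 0.\<close>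
definition H10_with_deriv :: "real \<Rightarrow> (real \<Rightarrow> real) \<Rightarrow> (real \<Rightarrow> real) \<Rightarrow> bool" where
  "H10_with_deriv L u u' \<longleftrightarrow> L2_on L u'
      \<and> (AE x in lebesgue_on {0<..<L}. u x = integral\<^sup>L (lebesgue_on {0..x}) u')
      \<and> integral\<^sup>L (lebesgue_on {0..L}) u' = 0"

text \<open>Weak solution of (P):  -(a u')' = -(phi(u))' - g'  in D'(0,L).\<close>
definition weak_solution ::
  "real \<Rightarrow> (real \<Rightarrow> real) \<Rightarrow> (real \<Rightarrow> real) \<Rightarrow> (real \<Rightarrow> ereal) \<Rightarrow> (real \<Rightarrow> real) \<Rightarrow> bool" where
  "weak_solution L a g \<phi> u \<longleftrightarrow>
     (\<exists>u'. H10_with_deriv L u u'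
        \<and> (AE x in lebesgue_on {0<..<L}. \<phi> (u x) \<noteq> \<infinity>)
        \<and> L2_on L (\<lambda>x. real_of_ereal (\<phi> (u x)))
        \<and> (\<forall>\<psi>. test_fun L \<psi> \<longrightarrow>
             (\<integral>x. a x * u' x * deriv \<psi> x \<partial>lebesgue_on {0<..<L})
           = (\<integral>x. (real_of_ereal (\<phi> (u x)) + g x) * deriv \<psi> x \<partial>lebesgue_on {0<..<L})))"

end

theory Submission
  imports Defs
begin

text \<open>A weak solution u lies in H^1_0(0,L), so it agrees a.e. with the continuous function
  W(x) = integral of u' over [0,x]; since \<phi>(u) is finite a.e. and \<phi>(0) = \<infinity>, W is not
  identically zero. Pick x0 with W(x0) > 0 (the case W(x0) < 0 is symmetric) and let x1 < x0 be
  the last zero of W before x0. For a primitive P of \<phi> on (0,\<infinity>) and x1 < a < x0, a chain rule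
  inequality for the absolutely continuous W bounds P(W(x0)) - P(W(a)) by the integral of
  (|\<phi>(W)| + 1) |u'| over [a,x0], which is finite because \<phi>(u) and u' are both in L^2.
  But P(W(a)) tends to -\<infinity> as a tends to x1, because \<phi> is not integrable at 0.\<close>

lemma mono_on_if_locally_mono:
  fixes Q :: "real \<Rightarrow> 'a::order"
  assumes "0 < d"
    and local_mono: "\<And>x y. a \<le> x \<Longrightarrow> x \<le> y \<Longrightarrow> y \<le> b \<Longrightarrow> y - x < d \<Longrightarrow> Q x \<le> Q y"
  shows "mono_on {a..b} Q"
proof (rule mono_onI)
  fix x y assume x: "x \<in> {a..b}" and y: "y \<in> {a..b}" and "x \<le> y"
  have steps: "\<forall>y. x \<le> y \<longrightarrow> y \<le> b \<longrightarrow> y \<le> x + real n * (d/2) \<longrightarrow> Q x \<le> Q y" for n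
  proof (induction n)
    case 0
    then show ?case by simp
  next
    case (Suc n)
    show ?case
    proof (intro allI impI)
      fix y assume y: "x \<le> y" "y \<le> b" "y \<le> x + real (Suc n) * (d/2)"
      define z where "z = max x (y - d/2)"
      have "z \<le> x + real n * (d/2)"
        using y(3) \<open>0 < d\<close> by (simp add: z_def algebra_simps add_divide_distrib)
      moreover have "x \<le> z" "z \<le> b"
        using y \<open>0 < d\<close> by (auto simp: z_def)
      ultimately have "Q x \<le> Q z"
        using Suc.IH by blast
      also have "Q z \<le> Q y"
        using local_mono[of z y] x y \<open>0 < d\<close> by (auto simp: z_def)
      finally show "Q x \<le> Q y" .
    qed
  qed
  obtain n :: nat where "(y - x) / (d/2) \<le> real n"
    using real_arch_simple by blast
  then have "y \<le> x + real n * (d/2)"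
    using \<open>0 < d\<close> by (simp add: field_simps)
  then show "Q x \<le> Q y"
    using steps \<open>x \<le> y\<close> y by auto
qed

definition primitive :: "(real \<Rightarrow> real) \<Rightarrow> real \<Rightarrow> real \<Rightarrow> real" where
  "primitive f c s = (if c \<le> s then integral {c..s} f else - integral {s..c} f)"

lemma primitive_diff:
  assumes "f integrable_on {min p c..max q c}" "p \<le> q"
  shows "primitive f c q - primitive f c p = integral {p..q} f"
proof -
  have int: "f integrable_on {s..t}" if "min p c \<le> s" "t \<le> max q c" for s t
    using integrable_on_subinterval[OF assms(1)] that by auto
  consider "c \<le> p" | "p < c" "c \<le> q" | "q < c"
    by linarith
  then show ?thesis
  proof cases
    case 1
    then show ?thesis
      using Henstock_Kurzweil_Integration.integral_combine[where a=c and c=p and b=q and f=f]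
        int[of c q] assms(2)
      by (simp add: primitive_def)
  next
    case 2
    then show ?thesis
      using Henstock_Kurzweil_Integration.integral_combine[where a=p and c=c and b=q and f=f]
        int[of p q]
      by (simp add: primitive_def)
  next
    case 3
    then show ?thesis
      using Henstock_Kurzweil_Integration.integral_combine[where a=p and c=q and b=c and f=f]
        int[of p c] assms(2)
      by (simp add: primitive_def)
  qed
qed

lemma primitive_diff_bound:
  assumes "continuous_on {0<..} f" "0 < c" "0 < p" "0 < q"
    and bound: "\<And>s. min p q \<le> s \<Longrightarrow> s \<le> max p q \<Longrightarrow> \<bar>f s\<bar> \<le> B"
  shows "\<bar>primitive f c q - primitive f c p\<bar> \<le> B * \<bar>q - p\<bar>"
proof -
  have le: "\<bar>primitive f c t - primitive f c s\<bar> \<le> B * (t - s)"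
    if "0 < s" "s \<le> t" "\<And>r. s \<le> r \<Longrightarrow> r \<le> t \<Longrightarrow> \<bar>f r\<bar> \<le> B" for s t
  proof -
    have int: "f integrable_on {min s c..max t c}"
      by (rule integrable_continuous_interval, rule continuous_on_subset[OF assms(1)])
         (use that \<open>0 < c\<close> in auto)
    have "norm (integral {s..t} f) \<le> B * measure lborel {s..t}"
      by (rule has_integral_bound_real[where S="{}"])
         (use that integrable_on_subinterval[OF int, of s t] in
           \<open>auto intro: order_trans[OF abs_ge_zero]\<close>)
    then show ?thesis
      using primitive_diff[OF int \<open>s \<le> t\<close>] \<open>s \<le> t\<close> by simp
  qed
  show ?thesis
  proof (cases "p \<le> q")
    case True
    then show ?thesis using le[of p q] bound assms(3) by auto
  next
    case False
    then show ?thesis using le[of q p] bound assms(4) by (auto simp: abs_minus_commute)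
  qed
qed

lemma primitive_comp_diff_bound:
  fixes U v f :: "real \<Rightarrow> real"
  assumes "x \<le> y" and "continuous_on {x..y} U" and "\<And>t. t \<in> {x..y} \<Longrightarrow> 0 < U t"
    and v: "v absolutely_integrable_on {x..y}" and U_diff: "U y - U x = integral {x..y} v"
    and "continuous_on {0<..} f" "0 < c"
    and bound: "\<And>t. t \<in> {x..y} \<Longrightarrow> \<bar>f (U t)\<bar> \<le> B"
  shows "\<bar>primitive f c (U y) - primitive f c (U x)\<bar> \<le> B * integral {x..y} (\<lambda>t. \<bar>v t\<bar>)"
proof -
  have "connected (U ` {x..y})"
    using \<open>continuous_on {x..y} U\<close> by (intro connected_continuous_image) auto
  then have range: "{min (U x) (U y)..max (U x) (U y)} \<subseteq> U ` {x..y}"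
    using \<open>x \<le> y\<close> by (intro connected_contains_Icc) (auto simp: min_def max_def)
  have lipschitz: "\<bar>primitive f c (U y) - primitive f c (U x)\<bar> \<le> B * \<bar>U y - U x\<bar>"
    by (rule primitive_diff_bound) (use assms range in \<open>auto dest!: subsetD\<close>)
  have "\<bar>U y - U x\<bar> \<le> integral {x..y} (\<lambda>t. \<bar>v t\<bar>)"
    using U_diff integral_norm_bound_integral[of v "{x..y}" "\<lambda>t. \<bar>v t\<bar>"] v
    by (auto simp: absolutely_integrable_on_def)
  moreover have "0 \<le> B"
    using bound[of x] \<open>x \<le> y\<close> by (auto intro: order_trans[OF abs_ge_zero])
  ultimately show ?thesis
    using lipschitz by (meson mult_left_mono order_trans)
qed

lemma primitive_comp_diff_le_integral:
  fixes U v f :: "real \<Rightarrow> real"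
  assumes "a \<le> b" and U_cont: "continuous_on {a..b} U"
    and U_pos: "\<And>t. t \<in> {a..b} \<Longrightarrow> 0 < U t"
    and v: "v absolutely_integrable_on {a..b}"
    and U_diff: "\<And>x y. a \<le> x \<Longrightarrow> x \<le> y \<Longrightarrow> y \<le> b \<Longrightarrow> U y - U x = integral {x..y} v"
    and f_cont: "continuous_on {0<..} f" and "0 < c"
    and fv_int: "(\<lambda>t. \<bar>f (U t)\<bar> * \<bar>v t\<bar>) integrable_on {a..b}"
  shows "primitive f c (U b) - primitive f c (U a)
    \<le> integral {a..b} (\<lambda>t. (\<bar>f (U t)\<bar> + 1) * \<bar>v t\<bar>)"
proof -
  define h where "h t = (\<bar>f (U t)\<bar> + 1) * \<bar>v t\<bar>" for t
  have abs_v: "(\<lambda>t. \<bar>v t\<bar>) integrable_on {a..b}"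
    using v by (simp add: absolutely_integrable_on_def)
  have "h integrable_on {a..b}"
    unfolding h_def distrib_right by (intro integrable_add fv_int) (simp add: abs_v)
  then have h_int: "h integrable_on {x..y}" if "a \<le> x" "y \<le> b" for x y
    using integrable_on_subinterval that by fastforce
  have "continuous_on {a..b} (\<lambda>t. \<bar>f (U t)\<bar>)"
    by (intro continuous_on_rabs continuous_on_compose2[OF f_cont U_cont]) (use U_pos in auto)
  then have "uniformly_continuous_on {a..b} (\<lambda>t. \<bar>f (U t)\<bar>)"
    by (rule compact_uniformly_continuous) simp
  then obtain d where "0 < d" and unif: "\<And>s t. s \<in> {a..b} \<Longrightarrow> t \<in> {a..b} \<Longrightarrow> dist t s < d \<Longrightarrow>
      dist \<bar>f (U t)\<bar> \<bar>f (U s)\<bar> < 1/2"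
    unfolding uniformly_continuous_on_def by (metis half_gt_zero zero_less_one)
  \<comment> \<open>U need not be differentiable, so instead of the chain rule we show that Q is
    nondecreasing on every subinterval of length below d, where |f \<circ> U| oscillates by less
    than 1/2, hence nondecreasing on [a,b].\<close>
  define Q where "Q x = integral {a..x} h - primitive f c (U x)" for x
  have "Q x \<le> Q y" if xy: "a \<le> x" "x \<le> y" "y \<le> b" "y - x < d" for x y
  proof -
    define B where "B = \<bar>f (U x)\<bar> + 1/2"
    have near: "t \<in> {x..y} \<Longrightarrow> \<bar>\<bar>f (U t)\<bar> - \<bar>f (U x)\<bar>\<bar> < 1/2" for t
      using unif[of x t] xy by (auto simp: dist_real_def)
    have "\<bar>primitive f c (U y) - primitive f c (U x)\<bar> \<le> B * integral {x..y} (\<lambda>t. \<bar>v t\<bar>)"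
    proof (rule primitive_comp_diff_bound)
      show "v absolutely_integrable_on {x..y}"
        by (rule absolutely_integrable_on_subinterval[OF v]) (use xy in auto)
      show "\<bar>f (U t)\<bar> \<le> B" if "t \<in> {x..y}" for t
        using near[OF that] unfolding B_def by linarith
    qed (use xy U_cont U_pos U_diff f_cont \<open>0 < c\<close> in
      \<open>auto intro: continuous_on_subset\<close>)
    also have "\<dots> = integral {x..y} (\<lambda>t. B * \<bar>v t\<bar>)"
      by simp
    also have "\<dots> \<le> integral {x..y} h"
    proof (rule integral_le)
      show "(\<lambda>t. B * \<bar>v t\<bar>) integrable_on {x..y}"
        using abs_v integrable_on_subinterval xy by (fastforce intro: integrable_on_mult_right)
      show "h integrable_on {x..y}"
        using h_int xy by simp
      show "B * \<bar>v t\<bar> \<le> h t" if "t \<in> {x..y}" for t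
      proof -
        have "B \<le> \<bar>f (U t)\<bar> + 1"
          using near[OF that] unfolding B_def by linarith
        then show ?thesis
          unfolding h_def by (simp add: mult_right_mono)
      qed
    qed
    finally have "\<bar>primitive f c (U y) - primitive f c (U x)\<bar> \<le> integral {x..y} h" .
    moreover have "integral {a..x} h + integral {x..y} h = integral {a..y} h"
      using Henstock_Kurzweil_Integration.integral_combine[where a=a and c=x and b=y and f=h]
        h_int[of a y] xy by simp
    ultimately show ?thesis
      by (simp add: Q_def)
  qed
  then have "mono_on {a..b} Q"
    by (rule mono_on_if_locally_mono[OF \<open>0 < d\<close>])
  then have "Q a \<le> Q b"
    using \<open>a \<le> b\<close> by (simp add: mono_onD)
  then show ?thesis
    by (simp add: Q_def h_def[abs_def])
qed

lemma not_integrable_comp_at_zero: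
  fixes U v f :: "real \<Rightarrow> real"
  assumes "x1 < x0" and U_cont: "continuous_on {x1..x0} U" and "U x1 = 0"
    and U_pos: "\<And>t. t \<in> {x1<..x0} \<Longrightarrow> 0 < U t"
    and v: "v absolutely_integrable_on {x1..x0}"
    and U_diff: "\<And>x y. x1 \<le> x \<Longrightarrow> x \<le> y \<Longrightarrow> y \<le> x0 \<Longrightarrow> U y - U x = integral {x..y} v"
    and f_cont: "continuous_on {0<..} f" and "0 < c"
    and diverges: "filterlim (\<lambda>e. integral {e..c} f) at_top (at_right 0)"
  shows "\<not> (\<lambda>t. \<bar>f (U t)\<bar> * \<bar>v t\<bar>) integrable_on {x1..x0}"
proof
  assume fv_int: "(\<lambda>t. \<bar>f (U t)\<bar> * \<bar>v t\<bar>) integrable_on {x1..x0}"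
  define h where "h t = (\<bar>f (U t)\<bar> + 1) * \<bar>v t\<bar>" for t
  define K where "K = integral {x1..x0} h"
  have "h integrable_on {x1..x0}"
    unfolding h_def distrib_right
    by (intro integrable_add fv_int) (use v in \<open>simp add: absolutely_integrable_on_def\<close>)
  have lower_bound: "primitive f c (U x0) - K \<le> primitive f c (U a)" if "x1 < a" "a < x0" for a
  proof -
    have "primitive f c (U x0) - primitive f c (U a) \<le> integral {a..x0} h"
      unfolding h_def
    proof (rule primitive_comp_diff_le_integral)
      show "v absolutely_integrable_on {a..x0}"
        by (rule absolutely_integrable_on_subinterval[OF v]) (use that in auto)
      show "(\<lambda>t. \<bar>f (U t)\<bar> * \<bar>v t\<bar>) integrable_on {a..x0}"
        by (rule integrable_on_subinterval[OF fv_int]) (use that in auto)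
    qed (use that U_cont U_pos U_diff f_cont \<open>0 < c\<close> in \<open>auto intro: continuous_on_subset\<close>)
    also have "integral {a..x0} h \<le> K"
      unfolding K_def
      by (rule integral_subset_le)
         (use that \<open>h integrable_on {x1..x0}\<close>
            integrable_on_subinterval[OF \<open>h integrable_on {x1..x0}\<close>, of a x0] in
          \<open>auto simp: h_def\<close>)
    finally show ?thesis
      by simp
  qed
  have U_tends: "(U \<longlongrightarrow> 0) (at_right x1)"
    using U_cont \<open>x1 < x0\<close> \<open>U x1 = 0\<close>
    by (metis at_within_Icc_at_right atLeastAtMost_iff continuous_on_def order.refl
        order.strict_implies_order)
  have inside: "eventually (\<lambda>x. x1 < x \<and> x < x0) (at_right x1)"
    by (rule eventually_at_rightI[OF _ \<open>x1 < x0\<close>]) auto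
  have "filterlim U (at_right 0) (at_right x1)"
    by (rule tendsto_imp_filterlim_at_right[OF U_tends])
       (use inside U_pos in \<open>auto elim: eventually_mono\<close>)
  then have "filterlim (\<lambda>x. integral {U x..c} f) at_top (at_right x1)"
    by (rule filterlim_compose[OF diverges])
  then have "eventually (\<lambda>x. K - primitive f c (U x0) < integral {U x..c} f) (at_right x1)"
    by (simp add: filterlim_at_top_dense)
  moreover have "eventually (\<lambda>x. U x < c) (at_right x1)"
    using order_tendstoD(2)[OF U_tends \<open>0 < c\<close>] .
  ultimately have "eventually (\<lambda>x. (x1 < x \<and> x < x0)
      \<and> K - primitive f c (U x0) < integral {U x..c} f \<and> U x < c) (at_right x1)"
    using inside by eventually_elim auto
  then obtain a where "x1 < a" "a < x0" "K - primitive f c (U x0) < integral {U a..c} f" "U a < c"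
    using eventually_happens[of _ "at_right x1"] by auto
  then show False
    using lower_bound[of a] by (simp add: primitive_def)
qed

lemma last_zero_before_pos:
  fixes W :: "real \<Rightarrow> real"
  assumes "a \<le> b" and W_cont: "continuous_on {a..b} W" and "W a = 0" "0 < W b"
  obtains x1 where "a \<le> x1" "x1 < b" "W x1 = 0" "\<And>x. x1 < x \<Longrightarrow> x \<le> b \<Longrightarrow> 0 < W x"
proof -
  define S where "S = {x \<in> {a..b}. W x = 0}"
  have "closed S"
    unfolding S_def by (rule continuous_closed_preimage_constant[OF W_cont]) simp
  moreover have "a \<in> S" "bdd_above S"
    using assms by (auto simp: S_def bdd_above_def)
  ultimately have "Sup S \<in> S"
    using closed_contains_Sup by blast
  then have x1: "a \<le> Sup S" "Sup S < b" "W (Sup S) = 0"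
    using \<open>0 < W b\<close> by (auto simp: S_def order.order_iff_strict)
  have "0 < W x" if x: "Sup S < x" "x \<le> b" for x
  proof (rule ccontr)
    assume "\<not> 0 < W x"
    moreover have "continuous_on {x..b} W"
      by (rule continuous_on_subset[OF W_cont]) (use x1 x in auto)
    ultimately obtain t where "x \<le> t" "t \<le> b" "W t = 0"
      using IVT'[of W x 0 b] \<open>0 < W b\<close> x by force
    then have "t \<le> Sup S"
      using x1 x \<open>bdd_above S\<close> by (intro cSup_upper) (auto simp: S_def)
    then show False
      using x \<open>x \<le> t\<close> by simp
  qed
  then show thesis
    using x1 that by blast
qed

lemma indefinite_integral_diff:
  fixes v :: "real \<Rightarrow> 'b::banach"
  assumes "v integrable_on {a..b}" and "a \<le> x" "x \<le> y" "y \<le> b"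
  shows "integral {a..y} v - integral {a..x} v = integral {x..y} v"
  using Henstock_Kurzweil_Integration.integral_combine[where a=a and c=x and b=y and f=v]
    integrable_on_subinterval[OF assms(1), of a y] assms(2-4)
  by (simp add: algebra_simps)

lemma not_integrable_comp_indefinite_integral:
  fixes F v :: "real \<Rightarrow> real"
  assumes v: "v absolutely_integrable_on {a..b}" and nonzero: "integral {a..b} v \<noteq> 0"
    and F_cont: "continuous_on (-{0}) F" and "0 < c"
    and diverges_right: "filterlim (\<lambda>e. integral {e..c} F) at_top (at_right 0)"
    and diverges_left: "filterlim (\<lambda>e. integral {-c..-e} F) at_top (at_right 0)"
  shows "\<not> (\<lambda>t. \<bar>F (integral {a..t} v)\<bar> * \<bar>v t\<bar>) integrable_on {a..b}"
proof
  assume Fv_int: "(\<lambda>t. \<bar>F (integral {a..t} v)\<bar> * \<bar>v t\<bar>) integrable_on {a..b}"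
  define W where "W x = integral {a..x} v" for x
  \<comment> \<open>Multiplying W by \<sigma> = \<plusminus>1 and reflecting F reduces W b < 0 to the case W b > 0.\<close>
  define \<sigma> where "\<sigma> = sgn (W b)"
  have "a \<le> b"
    using nonzero by (cases "a \<le> b") auto
  have \<sigma>: "\<sigma> * \<sigma> = 1" "\<bar>\<sigma>\<bar> = 1" "0 < \<sigma> * W b"
    using nonzero by (auto simp: \<sigma>_def W_def sgn_if)
  have W_cont: "continuous_on {a..b} W"
    unfolding W_def
    by (rule indefinite_integral_continuous_1) (use v in \<open>simp add: absolutely_integrable_on_def\<close>)
  have W_diff: "W y - W x = integral {x..y} v" if "a \<le> x" "x \<le> y" "y \<le> b" for x y
    unfolding W_def
    by (rule indefinite_integral_diff) (use v that in \<open>simp_all add: absolutely_integrable_on_def\<close>)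
  obtain x1 where x1: "a \<le> x1" "x1 < b" "\<sigma> * W x1 = 0"
    and pos: "\<And>x. x1 < x \<Longrightarrow> x \<le> b \<Longrightarrow> 0 < \<sigma> * W x"
    by (rule last_zero_before_pos[of a b "\<lambda>x. \<sigma> * W x"])
       (use \<open>a \<le> b\<close> W_cont \<sigma> in \<open>auto simp: W_def intro: continuous_intros\<close>)
  have "integral {e..c} (\<lambda>s. F (- s)) = integral {-c..-e} F" for e
    using Henstock_Kurzweil_Integration.integral_reflect_real[of "-e" "-c" F] by simp
  then have diverges: "filterlim (\<lambda>e. integral {e..c} (\<lambda>s. F (\<sigma> * s))) at_top (at_right 0)"
    using \<sigma> diverges_right diverges_left by (auto simp: abs_if split: if_splits)
  have "\<not> (\<lambda>t. \<bar>F (\<sigma> * (\<sigma> * W t))\<bar> * \<bar>\<sigma> * v t\<bar>) integrable_on {x1..b}"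
  proof (rule not_integrable_comp_at_zero
      [of x1 b "\<lambda>x. \<sigma> * W x" "\<lambda>t. \<sigma> * v t" "\<lambda>s. F (\<sigma> * s)" c])
    show "continuous_on {x1..b} (\<lambda>x. \<sigma> * W x)"
      using continuous_on_subset[OF W_cont, of "{x1..b}"] x1 by (auto intro: continuous_intros)
    show "0 < \<sigma> * W t" if "t \<in> {x1<..b}" for t
      using pos that by simp
    show "(\<lambda>t. \<sigma> * v t) absolutely_integrable_on {x1..b}"
      using absolutely_integrable_scaleR_left[OF absolutely_integrable_on_subinterval[OF v],
          of x1 b \<sigma>] x1
      by simp
    show "\<sigma> * W y - \<sigma> * W x = integral {x..y} (\<lambda>t. \<sigma> * v t)"
      if "x1 \<le> x" "x \<le> y" "y \<le> b" for x y
      using W_diff[of x y] that x1 by (simp add: right_diff_distrib[symmetric])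
    show "continuous_on {0<..} (\<lambda>s. F (\<sigma> * s))"
      by (rule continuous_on_compose2[OF F_cont]) (use \<sigma> in \<open>auto intro: continuous_intros\<close>)
  qed (use x1 \<open>0 < c\<close> diverges in auto)
  moreover have "(\<lambda>t. \<bar>F (\<sigma> * (\<sigma> * W t))\<bar> * \<bar>\<sigma> * v t\<bar>) integrable_on {x1..b}"
    using integrable_on_subinterval[OF Fv_int, of x1 b] x1 \<sigma>
    by (simp add: W_def abs_mult mult.assoc[symmetric])
  ultimately show False
    by contradiction
qed

lemma AE_lebesgue_on_imp_ex:
  assumes "AE x in lebesgue_on S. P x" and "S \<in> sets lebesgue" and "emeasure lebesgue S \<noteq> 0"
  shows "\<exists>x\<in>S. P x"
proof (rule ccontr)
  assume no_witness: "\<not> (\<exists>x\<in>S. P x)"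
  have "AE x in lebesgue_on S. x \<in> S"
    by (rule AE_I2) simp
  then have "AE x in lebesgue_on S. False"
    using assms(1) by eventually_elim (use no_witness in auto)
  then have "emeasure (lebesgue_on S) (space (lebesgue_on S)) = 0"
    using ae_filter_eq_bot_iff eventually_False by blast
  then show False
    using assms(2,3) by (simp add: emeasure_restrict_space)
qed

lemma L2_on_mult_integrable:
  assumes "L2_on L f" and "L2_on L g"
  shows "integrable (lebesgue_on {0<..<L}) (\<lambda>x. f x * g x)"
proof (rule Bochner_Integration.integrable_bound)
  show "integrable (lebesgue_on {0<..<L}) (\<lambda>x. (f x)\<^sup>2 + (g x)\<^sup>2)"
    using assms by (simp add: L2_on_def)
  show "(\<lambda>x. f x * g x) \<in> borel_measurable (lebesgue_on {0<..<L})"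
    using assms by (simp add: L2_on_def borel_measurable_times)
  show "AE x in lebesgue_on {0<..<L}. norm (f x * g x) \<le> norm ((f x)\<^sup>2 + (g x)\<^sup>2)"
  proof (rule AE_I2)
    fix x
    have "2 * \<bar>f x\<bar> * \<bar>g x\<bar> \<le> (f x)\<^sup>2 + (g x)\<^sup>2"
      using sum_squares_bound[of "\<bar>f x\<bar>" "\<bar>g x\<bar>"] by simp
    moreover have "0 \<le> \<bar>f x\<bar> * \<bar>g x\<bar>"
      by simp
    ultimately have "\<bar>f x\<bar> * \<bar>g x\<bar> \<le> (f x)\<^sup>2 + (g x)\<^sup>2"
      by linarith
    then show "norm (f x * g x) \<le> norm ((f x)\<^sup>2 + (g x)\<^sup>2)"
      by (simp add: abs_mult)
  qed
qed

lemma H10_with_deriv_absolutely_integrable: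
  assumes "H10_with_deriv L u u'" and "0 < L"
  shows "u' absolutely_integrable_on {0..L}"
    and "AE x in lebesgue_on {0<..<L}. u x = integral {0..x} u'"
proof -
  have L2: "L2_on L u'"
    using assms(1) by (simp add: H10_with_deriv_def)
  have fm: "finite_measure (lebesgue_on {0<..<L})"
    by (rule finite_measure_lebesgue_on) simp
  have "integrable (lebesgue_on {0<..<L}) u'"
    using finite_measure.square_integrable_imp_integrable[OF fm] L2
    unfolding L2_on_def by blast
  then have "u' absolutely_integrable_on {0<..<L}"
    unfolding set_integrable_def by (subst (asm) integrable_restrict_space) auto
  then show abs_int: "u' absolutely_integrable_on {0..L}"
    using absolutely_integrable_on_open_interval[where f=u' and a=0 and b=L] by simp
  have Lebesgue_eq_HK: "integral\<^sup>L (lebesgue_on {0..x}) u' = integral {0..x} u'"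
    if "x \<in> {0<..<L}" for x
  proof -
    have "u' absolutely_integrable_on {0..x}"
      using absolutely_integrable_on_subcbox[OF abs_int, where a=0 and b=x] that by auto
    then have "integrable (lebesgue_on {0..x}) u'"
      by (rule absolutely_integrable_imp_integrable) simp
    then have "(u' has_integral integral\<^sup>L (lebesgue_on {0..x}) u') {0..x}"
      by (rule has_integral_integral_lebesgue_on) simp
    then show ?thesis
      by (rule integral_unique[symmetric])
  qed
  have "AE x in lebesgue_on {0<..<L}. x \<in> {0<..<L}"
    by (rule AE_I2) simp
  moreover have "AE x in lebesgue_on {0<..<L}. u x = integral\<^sup>L (lebesgue_on {0..x}) u'"
    using assms(1) by (simp add: H10_with_deriv_def)
  ultimately show "AE x in lebesgue_on {0<..<L}. u x = integral {0..x} u'"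
    by eventually_elim (simp add: Lebesgue_eq_HK)
qed

lemma L2_on_abs_mult_integrable_on:
  assumes "L2_on L f" and "L2_on L g"
  shows "(\<lambda>x. \<bar>f x\<bar> * \<bar>g x\<bar>) integrable_on {0..L}"
proof -
  have "integrable (lebesgue_on {0<..<L}) (\<lambda>x. \<bar>f x * g x\<bar>)"
    using L2_on_mult_integrable[OF assms] by (rule integrable_abs)
  then have "(\<lambda>x. \<bar>f x * g x\<bar>) integrable_on {0<..<L}"
    by (rule integrable_on_lebesgue_on) simp
  then show ?thesis
    by (simp add: integrable_on_open_interval_real abs_mult)
qed

lemma L2_on_cong_AE:
  assumes "L2_on L f" and "g \<in> borel_measurable (lebesgue_on {0<..<L})"
    and "AE x in lebesgue_on {0<..<L}. f x = g x"
  shows "L2_on L g"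
proof -
  have "integrable (lebesgue_on {0<..<L}) (\<lambda>x. (g x)\<^sup>2)"
  proof (rule integrable_cong_AE_imp)
    show "integrable (lebesgue_on {0<..<L}) (\<lambda>x. (f x)\<^sup>2)"
      using assms(1) by (simp add: L2_on_def)
    show "(\<lambda>x. (g x)\<^sup>2) \<in> borel_measurable (lebesgue_on {0<..<L})"
      using assms(2) by simp
    show "AE x in lebesgue_on {0<..<L}. (f x)\<^sup>2 = (g x)\<^sup>2"
      using assms(3) by eventually_elim simp
  qed
  then show ?thesis
    using assms(2) by (simp add: L2_on_def)
qed

lemma weak_solution_integrable_comp:
  fixes \<phi> :: "real \<Rightarrow> ereal"
  assumes "weak_solution L a g \<phi> u" and "0 < L" and \<phi>_cont: "continuous_on UNIV \<phi>"
  obtains u' where "u' absolutely_integrable_on {0..L}"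
    and "AE x in lebesgue_on {0<..<L}. \<phi> (integral {0..x} u') \<noteq> \<infinity>"
    and "(\<lambda>x. \<bar>real_of_ereal (\<phi> (integral {0..x} u'))\<bar> * \<bar>u' x\<bar>) integrable_on {0..L}"
proof -
  obtain u' where H: "H10_with_deriv L u u'"
    and finite: "AE x in lebesgue_on {0<..<L}. \<phi> (u x) \<noteq> \<infinity>"
    and L2_\<phi>u: "L2_on L (\<lambda>x. real_of_ereal (\<phi> (u x)))"
    using assms(1) unfolding weak_solution_def by blast
  define W where "W x = integral {0..x} u'" for x
  have abs_int: "u' absolutely_integrable_on {0..L}"
    and u_eq: "AE x in lebesgue_on {0<..<L}. u x = W x"
    using H10_with_deriv_absolutely_integrable[OF H \<open>0 < L\<close>] by (simp_all add: W_def)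
  have "continuous_on {0<..<L} W"
    unfolding W_def
    by (rule continuous_on_subset[OF indefinite_integral_continuous_1])
       (use abs_int in \<open>auto simp: absolutely_integrable_on_def\<close>)
  then have "W \<in> borel_measurable (lebesgue_on {0<..<L})"
    by (rule continuous_imp_measurable_on_sets_lebesgue) simp
  then have "(\<lambda>x. \<phi> (W x)) \<in> borel_measurable (lebesgue_on {0<..<L})"
    using borel_measurable_continuous_onI[OF \<phi>_cont] by (rule measurable_compose)
  then have "(\<lambda>x. real_of_ereal (\<phi> (W x))) \<in> borel_measurable (lebesgue_on {0<..<L})"
    by (rule borel_measurable_real_of_ereal)
  moreover have "AE x in lebesgue_on {0<..<L}. real_of_ereal (\<phi> (u x)) = real_of_ereal (\<phi> (W x))"
    using u_eq by eventually_elim simp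
  ultimately have "L2_on L (\<lambda>x. real_of_ereal (\<phi> (W x)))"
    by (rule L2_on_cong_AE[OF L2_\<phi>u])
  moreover have "L2_on L u'"
    using H by (simp add: H10_with_deriv_def)
  ultimately have "(\<lambda>x. \<bar>real_of_ereal (\<phi> (W x))\<bar> * \<bar>u' x\<bar>) integrable_on {0..L}"
    by (rule L2_on_abs_mult_integrable_on)
  moreover have "AE x in lebesgue_on {0<..<L}. \<phi> (W x) \<noteq> \<infinity>"
    using finite u_eq by eventually_elim simp
  ultimately show thesis
    using that abs_int by (simp add: W_def)
qed

theorem mainTheorem6:
  fixes L \<alpha> \<beta> :: real and a g :: "real \<Rightarrow> real" and \<phi> :: "real \<Rightarrow> ereal"
  assumes "L > 0"
    and "a \<in> borel_measurable (lebesgue_on {0<..<L})"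
    and "0 < \<alpha>" "\<alpha> < \<beta>"
    and "AE x in lebesgue_on {0<..<L}. \<alpha> \<le> a x \<and> a x \<le> \<beta>"
    and "L2_on L g"
    and "continuous_on UNIV \<phi>"
    and "\<And>s. \<phi> s \<noteq> -\<infinity>"
    and "\<And>s. s \<noteq> 0 \<Longrightarrow> \<phi> s \<noteq> \<infinity>"
    and "\<phi> 0 = \<infinity>"
    and "\<And>\<delta>. 0 < \<delta> \<Longrightarrow> \<delta> < 1 \<Longrightarrow>
           filterlim (\<lambda>\<epsilon>. integral {\<epsilon>..\<delta>} (\<lambda>t. real_of_ereal (\<phi> t))) at_top (at_right 0)"
    and "\<And>\<delta>. 0 < \<delta> \<Longrightarrow> \<delta> < 1 \<Longrightarrow>
           filterlim (\<lambda>\<epsilon>. integral {-\<delta>..-\<epsilon>} (\<lambda>t. real_of_ereal (\<phi> t))) at_top (at_right 0)"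
  shows "\<not> (\<exists>u. weak_solution L a g \<phi> u)"
proof
  assume "\<exists>u. weak_solution L a g \<phi> u"
  then obtain u where "weak_solution L a g \<phi> u" ..
  then obtain u' where abs_int: "u' absolutely_integrable_on {0..L}"
    and finite: "AE x in lebesgue_on {0<..<L}. \<phi> (integral {0..x} u') \<noteq> \<infinity>"
    and comp_int: "(\<lambda>x. \<bar>real_of_ereal (\<phi> (integral {0..x} u'))\<bar> * \<bar>u' x\<bar>) integrable_on {0..L}"
    using weak_solution_integrable_comp \<open>L > 0\<close> assms(7) by blast
  have "AE x in lebesgue_on {0<..<L}. integral {0..x} u' \<noteq> 0"
    using finite by eventually_elim (use assms(10) in auto)
  then have "\<exists>x\<in>{0<..<L}. integral {0..x} u' \<noteq> 0"
    by (rule AE_lebesgue_on_imp_ex) (use \<open>L > 0\<close> in simp_all)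
  then obtain x0 where x0: "0 < x0" "x0 < L" and "integral {0..x0} u' \<noteq> 0"
    by auto
  have "continuous_on (-{0}) (real_of_ereal \<circ> \<phi>)"
  proof (subst continuous_on_iff_real[symmetric])
    show "\<bar>\<phi> s\<bar> \<noteq> \<infinity>" if "s \<in> -{0}" for s
      using assms(8,9)[of s] that by (cases "\<phi> s") auto
  qed (rule continuous_on_subset[OF assms(7)], simp)
  then have "\<not> (\<lambda>x. \<bar>real_of_ereal (\<phi> (integral {0..x} u'))\<bar> * \<bar>u' x\<bar>) integrable_on {0..x0}"
  proof (intro not_integrable_comp_indefinite_integral[where c="1/2"])
    show "u' absolutely_integrable_on {0..x0}"
      by (rule absolutely_integrable_on_subinterval[OF abs_int]) (use x0 in auto)
  qed (use \<open>integral {0..x0} u' \<noteq> 0\<close> assms(11,12)[of "1/2"] in \<open>simp_all add: o_def\<close>)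
  then show False
    using integrable_on_subinterval[OF comp_int, of 0 x0] x0 by simp
qed

end
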